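(* Let $t\ge 3$ be an integer, let $G$ be a graph not containing $K_{3,t}$ as a subgraph, let $D$ be a minimum dominating set of $G$ with $\gamma=|D|$, and let $\nabla$ be an integer with $\nabla>\nabla_1^B(G)$. Define $D_1=\{v\in V(G):$ for all $A\subseteq V(G)\setminus\{v\}$ with $N(v)\subseteq N[A]$ we have $|A|>2\nabla-1\}$, $R_1=V(G)\setminus N[D_1]$, $N_{R_1}(v)=N(v)\cap R_1$, $B_v=\{z\in V(G)\setminus\{v\}: |N_{R_1}(v)\cap N_{R_1}(z)|\ge(2\nabla-1)t+1\}$ for $v\in V(G)$, $W=\{v\in V(G): B_v\neq\emptyset\}$, and $D_2=\bigcup_{v\in W}(\{v\}\cup B_v)$. Let $\eta\in[0,1]$ be such that $|(D_1\cup D_2)\cap D|=\eta\gamma$. Then $|D_1\cup D_2|<\rho(G)\gamma+2\nabla\eta\gamma$.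
   Context: Graphs are finite, undirected and simple. $N(v)$ is the open neighbourhood of $v$, $N[v]=N(v)\cup\{v\}$, $N[A]=\bigcup_{a\in A}N[a]$. A dominating set is a set $D$ with $N[D]=V(G)$. A $1$-shallow minor of $G$ is a graph obtained from $G$ by deleting vertices and edges and contracting pairwise vertex-disjoint connected subgraphs of radius at most $1$; $\nabla_1^B(G)$ is the maximum edge density $|E(H)|/|V(H)|$ of a bipartite $1$-shallow minor $H$ of $G$. The Hall ratio $\rho(G)$ is $\max\{|V(H)|/\alpha(H): H\subseteq G\}$ with $\alpha(H)$ the independence number. $K_{3,t}$ is the complete bipartite graph with parts of sizes $3$ and $t$. *)

theory Defs
  imports Complex_Main "HOL-Library.Disjoint_Sets"
begin

definition simple_graph :: "'a set \<Rightarrow> ('a \<Rightarrow> 'a \<Rightarrow> bool) \<Rightarrow> bool" where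
  "simple_graph V E \<longleftrightarrow> finite V \<and>
     (\<forall>x y. E x y \<longrightarrow> x \<in> V \<and> y \<in> V \<and> x \<noteq> y \<and> E y x)"

definition nbhd :: "'a set \<Rightarrow> ('a \<Rightarrow> 'a \<Rightarrow> bool) \<Rightarrow> 'a \<Rightarrow> 'a set" where
  "nbhd V E v = {u \<in> V. E v u}"

definition cnbhd :: "'a set \<Rightarrow> ('a \<Rightarrow> 'a \<Rightarrow> bool) \<Rightarrow> 'a \<Rightarrow> 'a set" where
  "cnbhd V E v = insert v (nbhd V E v)"

definition cnbhd_set :: "'a set \<Rightarrow> ('a \<Rightarrow> 'a \<Rightarrow> bool) \<Rightarrow> 'a set \<Rightarrow> 'a set" where
  "cnbhd_set V E A = (\<Union>a\<in>A. cnbhd V E a)"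

definition dominating_set :: "'a set \<Rightarrow> ('a \<Rightarrow> 'a \<Rightarrow> bool) \<Rightarrow> 'a set \<Rightarrow> bool" where
  "dominating_set V E D \<longleftrightarrow> D \<subseteq> V \<and> cnbhd_set V E D = V"

definition min_dominating_set :: "'a set \<Rightarrow> ('a \<Rightarrow> 'a \<Rightarrow> bool) \<Rightarrow> 'a set \<Rightarrow> bool" where
  "min_dominating_set V E D \<longleftrightarrow> dominating_set V E D \<and>
     (\<forall>D'. dominating_set V E D' \<longrightarrow> card D \<le> card D')"

definition edges :: "'a set \<Rightarrow> ('a \<Rightarrow> 'a \<Rightarrow> bool) \<Rightarrow> 'a set set" where
  "edges V E = {{x, y} | x y. x \<in> V \<and> y \<in> V \<and> E x y}"

definition independent :: "'a set \<Rightarrow> ('a \<Rightarrow> 'a \<Rightarrow> bool) \<Rightarrow> 'a set \<Rightarrow> bool" where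
  "independent V E I \<longleftrightarrow> I \<subseteq> V \<and> (\<forall>x\<in>I. \<forall>y\<in>I. \<not> E x y)"

definition alpha :: "'a set \<Rightarrow> ('a \<Rightarrow> 'a \<Rightarrow> bool) \<Rightarrow> nat" where
  "alpha V E = Max {card I | I. independent V E I}"

definition subgraph :: "'a set \<Rightarrow> ('a \<Rightarrow> 'a \<Rightarrow> bool) \<Rightarrow> 'a set \<Rightarrow> ('a \<Rightarrow> 'a \<Rightarrow> bool) \<Rightarrow> bool" where
  "subgraph H EH V E \<longleftrightarrow> simple_graph H EH \<and> H \<subseteq> V \<and> (\<forall>x y. EH x y \<longrightarrow> E x y)"

definition hall_ratio :: "'a set \<Rightarrow> ('a \<Rightarrow> 'a \<Rightarrow> bool) \<Rightarrow> real" where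
  "hall_ratio V E = Max {real (card H) / real (alpha H EH) | H EH.
       subgraph H EH V E \<and> H \<noteq> {}}"

text \<open>The vertices of the minor are identified with their
branch sets: pairwise disjoint nonempty subsets S of V, each inducing a connected
subgraph of radius at most 1 (i.e. some c in S is adjacent to all other
vertices of S); an edge of the minor between S and T requires a G-edge between
S and T (deleting vertices/edges allows any subset of such edges).\<close>
definition shallow1_minor ::
  "'a set \<Rightarrow> ('a \<Rightarrow> 'a \<Rightarrow> bool) \<Rightarrow> 'a set set \<Rightarrow> ('a set \<Rightarrow> 'a set \<Rightarrow> bool) \<Rightarrow> bool" where
  "shallow1_minor V E VH EH \<longleftrightarrow> simple_graph VH EH \<and>
     disjoint VH \<and>
     (\<forall>S\<in>VH. S \<noteq> {} \<and> S \<subseteq> V \<and> (\<exists>c\<in>S. S \<subseteq> cnbhd V E c)) \<and>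
     (\<forall>S T. EH S T \<longrightarrow> (\<exists>x\<in>S. \<exists>y\<in>T. E x y))"

definition bipartite :: "'b set \<Rightarrow> ('b \<Rightarrow> 'b \<Rightarrow> bool) \<Rightarrow> bool" where
  "bipartite V E \<longleftrightarrow> (\<exists>X. X \<subseteq> V \<and> (\<forall>x y. E x y \<longrightarrow> (x \<in> X \<longleftrightarrow> y \<notin> X)))"

definition nabla1B :: "'a set \<Rightarrow> ('a \<Rightarrow> 'a \<Rightarrow> bool) \<Rightarrow> real" where
  "nabla1B V E = Max {real (card (edges VH EH)) / real (card VH) | VH EH.
       shallow1_minor V E VH EH \<and> bipartite VH EH \<and> VH \<noteq> {}}"

definition contains_K3t :: "'a set \<Rightarrow> ('a \<Rightarrow> 'a \<Rightarrow> bool) \<Rightarrow> nat \<Rightarrow> bool" where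
  "contains_K3t V E t \<longleftrightarrow> (\<exists>A B. A \<subseteq> V \<and> B \<subseteq> V \<and> A \<inter> B = {} \<and>
       card A = 3 \<and> card B = t \<and> (\<forall>a\<in>A. \<forall>b\<in>B. E a b))"

end

theory Submission
  imports Defs
begin

text \<open>
Put X = D1 \<union> D2 and call v \<in> X - D expensive if no set of fewer than 2\<nabla> vertices of D
dominates N(v). For an independent set I of expensive vertices, contract every vertex of D
together with the vertices of V - (I \<union> D) it dominates (choosing one dominator each) and keep
the vertices of I as singletons: this bipartite 1-shallow minor has |I| + |D| vertices and at
least 2\<nabla>|I| edges, and its density is below \<nabla>, so |I| < |D|. Hence there are fewer than
\<rho>(G)\<gamma> expensive vertices.

All other vertices of X - D are charged to X \<inter> D. If z \<in> B v, then v and z have more than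
(2\<nabla> - 1)t common neighbours in R1; a set of at most 2\<nabla> - 1 vertices other than v and z
dominating them contains, by pigeonhole, a vertex adjacent to t + 1 of them, and K_{3,t}
appears. So vertices with a partner outside D are expensive (as are those of D1), while for
v \<notin> D1 the whole of B v lies inside a dominator of N(v) of size at most 2\<nabla> - 1. Every
cheap vertex of X - D is thus a partner of some z \<in> X \<inter> D, which has at most 2\<nabla> - 1
partners, and |X| < \<rho>(G)\<gamma> + 2\<nabla>|X \<inter> D| follows.
\<close>

lemma simple_graph_sym: "simple_graph V E \<Longrightarrow> E x y \<Longrightarrow> E y x"
  and simple_graph_in_V: "simple_graph V E \<Longrightarrow> E x y \<Longrightarrow> x \<in> V \<and> y \<in> V"
  and simple_graph_irrefl: "simple_graph V E \<Longrightarrow> \<not> E x x"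
  unfolding simple_graph_def by blast+

section \<open>Bipartite 1-shallow minors\<close>

lemma finite_bounded_ratios:
  assumes "\<forall>x\<in>X. \<exists>p q. x = real p / real q \<and> p \<le> M \<and> q \<le> M"
  shows "finite X"
proof (rule finite_subset)
  show "X \<subseteq> (\<lambda>(p, q). real p / real q) ` ({..M} \<times> {..M})"
    using assms by fastforce
qed auto

lemma density_le_nabla1B:
  assumes "finite V" "shallow1_minor V E VH EH" "bipartite VH EH" "VH \<noteq> {}"
  shows "real (card (edges VH EH)) / real (card VH) \<le> nabla1B V E"
  unfolding nabla1B_def
proof (rule Max_ge)
  let ?M = "2 ^ 2 ^ card V :: nat"
  have "card (edges VH EH) \<le> ?M \<and> card VH \<le> ?M" if "shallow1_minor V E VH EH" for VH EH
  proof -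
    have VH: "VH \<subseteq> Pow V" using that unfolding shallow1_minor_def by blast
    then have "edges VH EH \<subseteq> Pow (Pow V)" unfolding edges_def by blast
    then have "card (edges VH EH) \<le> ?M"
      using card_mono[of "Pow (Pow V)"] \<open>finite V\<close> by (simp add: card_Pow)
    moreover have "card VH \<le> 2 ^ card V"
      using card_mono[OF _ VH] \<open>finite V\<close> by (simp add: card_Pow)
    moreover have "(2::nat) ^ card V \<le> ?M"
      by (rule power_increasing) (simp_all add: less_exp less_imp_le)
    ultimately show ?thesis by linarith
  qed
  then show "finite {real (card (edges VH EH)) / real (card VH) | VH EH.
      shallow1_minor V E VH EH \<and> bipartite VH EH \<and> VH \<noteq> {}}"
    by (intro finite_bounded_ratios) blast
qed (use assms in blast)

lemma nabla1B_nonneg: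
  assumes "finite V" "V \<noteq> {}"
  shows "0 \<le> nabla1B V E"
proof -
  obtain v where "v \<in> V" using assms by blast
  then have "shallow1_minor V E {{v}} (\<lambda>_ _. False)"
    unfolding shallow1_minor_def simple_graph_def cnbhd_def by (auto simp: disjoint_def)
  moreover have "bipartite {{v}} (\<lambda>_ _. False)" unfolding bipartite_def by auto
  ultimately show ?thesis
    using density_le_nabla1B[OF \<open>finite V\<close>] by fastforce
qed

definition radius1_branch_sets :: "'a set \<Rightarrow> ('a \<Rightarrow> 'a \<Rightarrow> bool) \<Rightarrow> 'a set set \<Rightarrow> bool" where
  "radius1_branch_sets V E P \<longleftrightarrow>
     disjoint P \<and> (\<forall>S\<in>P. S \<noteq> {} \<and> S \<subseteq> V \<and> (\<exists>c\<in>S. S \<subseteq> cnbhd V E c))"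

definition bipartite_contraction ::
  "'a set set \<Rightarrow> 'a set set \<Rightarrow> ('a \<Rightarrow> 'a \<Rightarrow> bool) \<Rightarrow> 'a set \<Rightarrow> 'a set \<Rightarrow> bool" where
  "bipartite_contraction L R E X Y \<longleftrightarrow>
     (X \<in> L \<and> Y \<in> R \<or> X \<in> R \<and> Y \<in> L) \<and> (\<exists>x\<in>X. \<exists>y\<in>Y. E x y)"

lemma finite_radius1_branch_sets:
  "finite V \<Longrightarrow> radius1_branch_sets V E P \<Longrightarrow> finite P"
  unfolding radius1_branch_sets_def by (meson Pow_iff finite_Pow_iff finite_subset subsetI)

lemma shallow1_minor_bipartite_contraction:
  assumes G: "simple_graph V E" and P: "radius1_branch_sets V E (L \<union> R)" and "L \<inter> R = {}"
  shows "shallow1_minor V E (L \<union> R) (bipartite_contraction L R E)"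
    and "bipartite (L \<union> R) (bipartite_contraction L R E)"
proof -
  have "finite (L \<union> R)"
    using finite_radius1_branch_sets[OF _ P] G unfolding simple_graph_def by blast
  then have "simple_graph (L \<union> R) (bipartite_contraction L R E)"
    using \<open>L \<inter> R = {}\<close> simple_graph_sym[OF G]
    unfolding simple_graph_def bipartite_contraction_def by blast
  then show "shallow1_minor V E (L \<union> R) (bipartite_contraction L R E)"
    using P unfolding shallow1_minor_def radius1_branch_sets_def bipartite_contraction_def
    by blast
  show "bipartite (L \<union> R) (bipartite_contraction L R E)"
    unfolding bipartite_def using \<open>L \<inter> R = {}\<close>
    by (intro exI[of _ L]) (auto simp: bipartite_contraction_def)
qed

definition contraction_nbrs :: "('a \<Rightarrow> 'a \<Rightarrow> bool) \<Rightarrow> 'a set set \<Rightarrow> 'a set \<Rightarrow> 'a set set" where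
  "contraction_nbrs E R X = {Y \<in> R. \<exists>x\<in>X. \<exists>y\<in>Y. E x y}"

lemma sum_contraction_nbrs_le_card_edges:
  assumes "finite L" "finite R" "L \<inter> R = {}"
  shows "(\<Sum>X\<in>L. card (contraction_nbrs E R X))
           \<le> card (edges (L \<union> R) (bipartite_contraction L R E))"
proof -
  let ?pairs = "Sigma L (contraction_nbrs E R)"
  have inj: "inj_on (\<lambda>(X, Y). {X, Y}) ?pairs"
    using assms(3) unfolding contraction_nbrs_def by (auto intro!: inj_onI simp: doubleton_eq_iff)
  have sub: "(\<lambda>(X, Y). {X, Y}) ` ?pairs \<subseteq> edges (L \<union> R) (bipartite_contraction L R E)"
  proof clarify
    fix X Y assume "X \<in> L" "Y \<in> contraction_nbrs E R X"
    then have "bipartite_contraction L R E X Y" "Y \<in> R"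
      unfolding contraction_nbrs_def bipartite_contraction_def by auto
    then show "{X, Y} \<in> edges (L \<union> R) (bipartite_contraction L R E)"
      unfolding edges_def using \<open>X \<in> L\<close> by blast
  qed
  have "edges (L \<union> R) (bipartite_contraction L R E) \<subseteq> Pow (L \<union> R)"
    unfolding edges_def by blast
  then have "finite (edges (L \<union> R) (bipartite_contraction L R E))"
    by (rule finite_subset) (simp add: assms)
  then have "card ?pairs \<le> card (edges (L \<union> R) (bipartite_contraction L R E))"
    using card_mono[OF _ sub] card_image[OF inj] by simp
  moreover have "card ?pairs = (\<Sum>X\<in>L. card (contraction_nbrs E R X))"
    using assms(1,2) by (intro card_SigmaI) (auto simp: contraction_nbrs_def)
  ultimately show ?thesis by simp
qed

lemma card_less_if_bipartite_contraction_dense: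
  assumes G: "simple_graph V E" and P: "radius1_branch_sets V E (L \<union> R)"
    and "L \<inter> R = {}" "L \<noteq> {}"
    and dense: "\<And>X. X \<in> L \<Longrightarrow> 2 * Nb \<le> int (card (contraction_nbrs E R X))"
    and nabla: "nabla1B V E < real_of_int Nb"
  shows "card L < card R"
proof -
  let ?EH = "bipartite_contraction L R E"
  have "finite V" using G unfolding simple_graph_def by blast
  then have "finite L" "finite R"
    using finite_radius1_branch_sets[OF _ P] by auto
  have "0 < card (L \<union> R)" using \<open>finite L\<close> \<open>finite R\<close> \<open>L \<noteq> {}\<close> by (simp add: card_gt_0_iff)
  have "real (card (edges (L \<union> R) ?EH)) / real (card (L \<union> R)) < real_of_int Nb"
    using density_le_nabla1B[OF \<open>finite V\<close> shallow1_minor_bipartite_contraction[OF G P \<open>L \<inter> R = {}\<close>]]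
      \<open>L \<noteq> {}\<close> nabla by fastforce
  then have "real (card (edges (L \<union> R) ?EH)) < real_of_int Nb * (real (card L) + real (card R))"
    using \<open>0 < card (L \<union> R)\<close> card_Un_disjoint[OF \<open>finite L\<close> \<open>finite R\<close> \<open>L \<inter> R = {}\<close>]
    by (simp add: divide_less_eq)
  then have "real_of_int (int (card (edges (L \<union> R) ?EH)))
      < real_of_int (Nb * (int (card L) + int (card R)))"
    by simp
  then have edges_less: "int (card (edges (L \<union> R) ?EH)) < Nb * (int (card L) + int (card R))"
    by (simp only: of_int_less_iff)
  have "2 * Nb * int (card L) \<le> int (\<Sum>X\<in>L. card (contraction_nbrs E R X))"
    using sum_mono[of L "\<lambda>_. 2 * Nb" "\<lambda>X. int (card (contraction_nbrs E R X))"] dense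
    by (simp add: mult.commute)
  also have "\<dots> \<le> int (card (edges (L \<union> R) ?EH))"
    using sum_contraction_nbrs_le_card_edges[OF \<open>finite L\<close> \<open>finite R\<close> \<open>L \<inter> R = {}\<close>]
    by (simp only: of_nat_le_iff)
  finally have "Nb * int (card L) < Nb * int (card R)"
    using edges_less by (simp add: algebra_simps)
  moreover have "V \<noteq> {}"
    using \<open>L \<noteq> {}\<close> P unfolding radius1_branch_sets_def by blast
  then have "0 \<le> Nb"
    using nabla nabla1B_nonneg[OF \<open>finite V\<close>, of E] by linarith
  ultimately show ?thesis by (simp add: mult_less_cancel_left)
qed

section \<open>Independence number and Hall ratio\<close>

lemma finite_independent_cards: "finite H \<Longrightarrow> finite {card I | I. independent H EH I}"
  by (rule finite_subset[of _ "{..card H}"]) (auto simp: independent_def intro: card_mono)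

lemma card_le_alpha: "finite H \<Longrightarrow> independent H EH I \<Longrightarrow> card I \<le> alpha H EH"
  unfolding alpha_def by (rule Max_ge[OF finite_independent_cards]) auto

lemma alpha_attained:
  assumes "finite H"
  obtains I where "independent H EH I" "card I = alpha H EH"
proof -
  have "{card I | I. independent H EH I} \<noteq> {}" by (auto simp: independent_def)
  then have "alpha H EH \<in> {card I | I. independent H EH I}"
    unfolding alpha_def by (rule Max_in[OF finite_independent_cards[OF assms]])
  then show ?thesis using that by force
qed

lemma alpha_le_card:
  assumes "finite H"
  shows "alpha H EH \<le> card H"
proof -
  obtain I where "independent H EH I" "card I = alpha H EH"
    using alpha_attained[OF assms] .
  then show ?thesis using card_mono[OF assms] unfolding independent_def by metis
qed

lemma alpha_pos:
  assumes "simple_graph H EH" "H \<noteq> {}"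
  shows "0 < alpha H EH"
proof -
  obtain h where "h \<in> H" using assms(2) by blast
  then have "independent H EH {h}"
    using simple_graph_irrefl[OF assms(1)] unfolding independent_def by blast
  then show ?thesis
    using card_le_alpha[of H EH "{h}"] assms(1) unfolding simple_graph_def by simp
qed

definition induced :: "('a \<Rightarrow> 'a \<Rightarrow> bool) \<Rightarrow> 'a set \<Rightarrow> 'a \<Rightarrow> 'a \<Rightarrow> bool" where
  "induced E S x y \<longleftrightarrow> E x y \<and> x \<in> S \<and> y \<in> S"

lemma subgraph_induced: "simple_graph V E \<Longrightarrow> S \<subseteq> V \<Longrightarrow> subgraph S (induced E S) V E"
  unfolding subgraph_def simple_graph_def induced_def by (blast intro: finite_subset)

lemma independent_induced_iff:
  "S \<subseteq> V \<Longrightarrow> independent S (induced E S) I \<longleftrightarrow> I \<subseteq> S \<and> independent V E I"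
  unfolding independent_def induced_def by blast

lemma hall_ratio_ge:
  assumes "finite V" "subgraph H EH V E" "H \<noteq> {}"
  shows "real (card H) / real (alpha H EH) \<le> hall_ratio V E"
  unfolding hall_ratio_def
proof (rule Max_ge)
  have "card H \<le> card V \<and> alpha H EH \<le> card V" if "subgraph H EH V E" for H EH
  proof -
    have "H \<subseteq> V" using that unfolding subgraph_def by blast
    then have "card H \<le> card V" "finite H"
      using card_mono finite_subset \<open>finite V\<close> by blast+
    then show ?thesis using alpha_le_card[of H EH] by linarith
  qed
  then show "finite {real (card H) / real (alpha H EH) | H EH. subgraph H EH V E \<and> H \<noteq> {}}"
    by (intro finite_bounded_ratios) blast
qed (use assms in blast)

lemma card_le_hall_ratio_mult_alpha:
  assumes G: "simple_graph V E" and "S \<subseteq> V" "S \<noteq> {}"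
  shows "real (card S) \<le> hall_ratio V E * real (alpha S (induced E S))"
proof -
  have sub: "subgraph S (induced E S) V E" using subgraph_induced[OF G \<open>S \<subseteq> V\<close>] .
  then have "0 < alpha S (induced E S)"
    using alpha_pos \<open>S \<noteq> {}\<close> unfolding subgraph_def by blast
  moreover have "real (card S) / real (alpha S (induced E S)) \<le> hall_ratio V E"
    using hall_ratio_ge[OF _ sub \<open>S \<noteq> {}\<close>] G unfolding simple_graph_def by blast
  ultimately show ?thesis by (simp add: divide_le_eq mult.commute)
qed

lemma hall_ratio_ge_1:
  assumes G: "simple_graph V E" and "V \<noteq> {}"
  shows "1 \<le> hall_ratio V E"
proof (rule ccontr)
  assume "\<not> 1 \<le> hall_ratio V E"
  have "finite V" using G unfolding simple_graph_def by blast
  then have "alpha V (induced E V) \<le> card V"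
    by (rule alpha_le_card)
  moreover have "0 < alpha V (induced E V)"
    using alpha_pos subgraph_induced[OF G order_refl] \<open>V \<noteq> {}\<close>
    unfolding subgraph_def by blast
  then have "hall_ratio V E * real (alpha V (induced E V)) < real (alpha V (induced E V))"
    using \<open>\<not> 1 \<le> hall_ratio V E\<close> by simp
  moreover have "real (card V) \<le> hall_ratio V E * real (alpha V (induced E V))"
    using card_le_hall_ratio_mult_alpha[OF G order_refl \<open>V \<noteq> {}\<close>] .
  ultimately show False by linarith
qed

lemma card_le_hall_ratio_mult:
  assumes G: "simple_graph V E" and "V \<noteq> {}" "S \<subseteq> V"
    and small: "\<And>I. I \<subseteq> S \<Longrightarrow> independent V E I \<Longrightarrow> card I \<le> m"
  shows "real (card S) \<le> hall_ratio V E * real m"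
proof (cases "S = {}")
  case True
  then show ?thesis using hall_ratio_ge_1[OF G \<open>V \<noteq> {}\<close>] by simp
next
  case False
  have "finite S" using G \<open>S \<subseteq> V\<close> finite_subset unfolding simple_graph_def by blast
  then obtain I where "independent S (induced E S) I" "card I = alpha S (induced E S)"
    by (rule alpha_attained)
  then have "alpha S (induced E S) \<le> m"
    using small independent_induced_iff[OF \<open>S \<subseteq> V\<close>] by metis
  then have "hall_ratio V E * real (alpha S (induced E S)) \<le> hall_ratio V E * real m"
    using hall_ratio_ge_1[OF G \<open>V \<noteq> {}\<close>] by (intro mult_left_mono) auto
  then show ?thesis
    using card_le_hall_ratio_mult_alpha[OF G \<open>S \<subseteq> V\<close> False] by linarith
qed

section \<open>Dominating sets in K_{3,t}-free graphs\<close>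

lemma dominating_set_stars:
  assumes "dominating_set V E D" "I \<inter> D = {}"
  obtains S where "\<And>d. d \<in> D \<Longrightarrow> d \<in> S d \<and> S d \<subseteq> cnbhd V E d - I"
    and "\<And>d d'. d \<in> D \<Longrightarrow> d' \<in> D \<Longrightarrow> d \<noteq> d' \<Longrightarrow> S d \<inter> S d' = {}"
    and "V - I \<subseteq> (\<Union>d\<in>D. S d)"
proof -
  have "\<forall>u\<in>V - D. \<exists>d\<in>D. u \<in> cnbhd V E d"
    using assms(1) unfolding dominating_set_def cnbhd_set_def by blast
  then obtain f where f: "\<And>u. u \<in> V - D \<Longrightarrow> f u \<in> D \<and> u \<in> cnbhd V E (f u)"
    by metis
  define S where "S d = insert d {u \<in> V - (I \<union> D). f u = d}" for d
  show ?thesis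
  proof
    show "d \<in> S d \<and> S d \<subseteq> cnbhd V E d - I" if "d \<in> D" for d
      using that f assms(2) unfolding S_def cnbhd_def by auto
    show "S d \<inter> S d' = {}" if "d \<in> D" "d' \<in> D" "d \<noteq> d'" for d d'
      using that unfolding S_def by auto
    show "V - I \<subseteq> (\<Union>d\<in>D. S d)"
      using f unfolding S_def by blast
  qed
qed

lemma radius1_branch_sets_singletons_stars:
  assumes "I \<subseteq> V" "D \<subseteq> V"
    and S: "\<And>d. d \<in> D \<Longrightarrow> d \<in> S d \<and> S d \<subseteq> cnbhd V E d - I"
    and S_disj: "\<And>d d'. d \<in> D \<Longrightarrow> d' \<in> D \<Longrightarrow> d \<noteq> d' \<Longrightarrow> S d \<inter> S d' = {}"
  shows "radius1_branch_sets V E ((\<lambda>v. {v}) ` I \<union> S ` D)"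
  unfolding radius1_branch_sets_def
proof
  show "disjoint ((\<lambda>v. {v}) ` I \<union> S ` D)"
    using S S_disj unfolding disjoint_def by fastforce
  show "\<forall>X\<in>(\<lambda>v. {v}) ` I \<union> S ` D. X \<noteq> {} \<and> X \<subseteq> V \<and> (\<exists>c\<in>X. X \<subseteq> cnbhd V E c)"
    using S assms(1,2) unfolding cnbhd_def nbhd_def by blast
qed

lemma card_independent_less_card_dominating:
  assumes G: "simple_graph V E" and D: "dominating_set V E D"
    and I: "I \<subseteq> V - D" "I \<noteq> {}" "\<forall>x\<in>I. \<forall>y\<in>I. \<not> E x y"
    and large_covers: "\<And>v A. v \<in> I \<Longrightarrow> A \<subseteq> D \<Longrightarrow> nbhd V E v \<subseteq> cnbhd_set V E A
                         \<Longrightarrow> 2 * Nb \<le> int (card A)"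
    and nabla: "nabla1B V E < real_of_int Nb"
  shows "card I < card D"
proof -
  obtain S where S: "\<And>d. d \<in> D \<Longrightarrow> d \<in> S d \<and> S d \<subseteq> cnbhd V E d - I"
    and S_disj: "\<And>d d'. d \<in> D \<Longrightarrow> d' \<in> D \<Longrightarrow> d \<noteq> d' \<Longrightarrow> S d \<inter> S d' = {}"
    and S_cover: "V - I \<subseteq> (\<Union>d\<in>D. S d)"
    using dominating_set_stars[OF D, of I] I(1) by blast
  have "inj_on S D"
    using S S_disj by (intro inj_onI) blast
  define L where "L = (\<lambda>v. {v}) ` I"
  define R where "R = S ` D"
  have "L \<inter> R = {}" using S unfolding L_def R_def by fastforce
  have "radius1_branch_sets V E (L \<union> R)"
    unfolding L_def R_def using I(1) D
    by (intro radius1_branch_sets_singletons_stars S S_disj) (auto simp: dominating_set_def)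
  moreover have "2 * Nb \<le> int (card (contraction_nbrs E R X))" if "X \<in> L" for X
  proof -
    obtain v where "v \<in> I" "X = {v}" using \<open>X \<in> L\<close> unfolding L_def by blast
    define A where "A = {d \<in> D. \<exists>x\<in>S d. E v x}"
    have "nbhd V E v \<subseteq> cnbhd_set V E A"
    proof
      fix u assume "u \<in> nbhd V E v"
      then have "u \<in> V - I" "E v u" using I(3) \<open>v \<in> I\<close> unfolding nbhd_def by auto
      then obtain d where "d \<in> D" "u \<in> S d" using S_cover by blast
      then show "u \<in> cnbhd_set V E A"
        using S \<open>E v u\<close> unfolding A_def cnbhd_set_def by blast
    qed
    moreover have "A \<subseteq> D" unfolding A_def by blast
    ultimately have "2 * Nb \<le> int (card A)" using large_covers \<open>v \<in> I\<close> by blast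
    moreover have "contraction_nbrs E R X = S ` A"
      unfolding contraction_nbrs_def R_def A_def \<open>X = {v}\<close> by blast
    moreover have "card (S ` A) = card A"
      using card_image inj_on_subset[OF \<open>inj_on S D\<close> \<open>A \<subseteq> D\<close>] by blast
    ultimately show ?thesis by simp
  qed
  ultimately have "card L < card R"
    using card_less_if_bipartite_contraction_dense[OF G _ \<open>L \<inter> R = {}\<close> _ _ nabla] I(2)
    unfolding L_def by blast
  moreover have "card L = card I" unfolding L_def by (rule card_image) (simp add: inj_on_def)
  moreover have "card R = card D" unfolding R_def using \<open>inj_on S D\<close> by (rule card_image)
  ultimately show ?thesis by simp
qed

lemma contains_K3t_if_common_nbhd_covered:
  assumes G: "simple_graph V E" and "v \<noteq> z"
    and C: "C \<subseteq> nbhd V E v \<inter> nbhd V E z" "k * t + 1 \<le> card C"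
    and A: "finite A" "A \<subseteq> V" "card A \<le> k" "v \<notin> A" "z \<notin> A"
    and cover: "C \<subseteq> cnbhd_set V E A"
  shows "contains_K3t V E t"
proof -
  have "C \<subseteq> V" using C(1) unfolding nbhd_def by blast
  then have "finite C"
    using G finite_subset unfolding simple_graph_def by blast
  have "\<exists>a\<in>A. t + 1 \<le> card (C \<inter> cnbhd V E a)"
  proof (rule ccontr)
    assume "\<not> ?thesis"
    then have few: "\<And>a. a \<in> A \<Longrightarrow> card (C \<inter> cnbhd V E a) \<le> t" by force
    have "card C \<le> (\<Sum>a\<in>A. card (C \<inter> cnbhd V E a))"
      using card_UN_le[OF \<open>finite A\<close>, of "\<lambda>a. C \<inter> cnbhd V E a"] cover
      unfolding cnbhd_set_def by (simp add: Int_UN_distrib[symmetric] Int_absorb2)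
    also have "\<dots> \<le> card A * t"
      using sum_bounded_above[of A "\<lambda>a. card (C \<inter> cnbhd V E a)" t] few by simp
    also have "\<dots> \<le> k * t" using A(3) by simp
    finally show False using C(2) by linarith
  qed
  then obtain a where "a \<in> A" and "t + 1 \<le> card (C \<inter> cnbhd V E a)" by blast
  then have "t \<le> card (C \<inter> cnbhd V E a - {a})"
    using diff_card_le_card_Diff[of "{a}" "C \<inter> cnbhd V E a"] by simp
  then obtain T where T: "T \<subseteq> C \<inter> cnbhd V E a - {a}" "card T = t"
    by (meson obtain_subset_with_card_n)
  have "a \<noteq> v" "a \<noteq> z" "a \<in> V" using \<open>a \<in> A\<close> A by auto
  have "\<forall>x\<in>{v, z, a}. \<forall>y\<in>T. E x y"
    using T C(1) unfolding nbhd_def cnbhd_def by auto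
  moreover have "{v, z, a} \<inter> T = {}"
    using T C(1) simple_graph_irrefl[OF G] unfolding nbhd_def by blast
  moreover obtain c where "c \<in> C" using C(2) by fastforce
  then have "v \<in> V" "z \<in> V" using C(1) simple_graph_in_V[OF G] unfolding nbhd_def by blast+
  then have "{v, z, a} \<subseteq> V" using \<open>a \<in> V\<close> by blast
  moreover have "T \<subseteq> V" using T \<open>C \<subseteq> V\<close> by blast
  ultimately show ?thesis
    unfolding contains_K3t_def using \<open>v \<noteq> z\<close> \<open>a \<noteq> v\<close> \<open>a \<noteq> z\<close> \<open>card T = t\<close>
    by (intro exI[of _ "{v, z, a}"] exI[of _ T]) auto
qed

lemma card_le_charging:
  assumes "finite X" "finite G" "\<And>z. finite (P z)"
    and cover: "X - D \<subseteq> G \<union> (\<Union>z\<in>X \<inter> D. P z)"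
    and charge: "\<And>z. card (P z) \<le> k"
  shows "card X \<le> card G + (k + 1) * card (X \<inter> D)"
proof -
  have "finite (G \<union> (\<Union>z\<in>X \<inter> D. P z))" using assms(1-3) by blast
  then have "card (X - D) \<le> card G + card (\<Union>z\<in>X \<inter> D. P z)"
    using card_mono[OF _ cover] card_Un_le le_trans by blast
  also have "card (\<Union>z\<in>X \<inter> D. P z) \<le> (\<Sum>z\<in>X \<inter> D. card (P z))"
    using assms(1) by (intro card_UN_le) blast
  also have "\<dots> \<le> k * card (X \<inter> D)"
    using sum_bounded_above[of "X \<inter> D" "\<lambda>z. card (P z)" k] charge by (simp add: mult.commute)
  finally show ?thesis
    using card_Int_Diff[OF assms(1), of D] by (simp add: algebra_simps)
qed

section \<open>The sets D1 and D2\<close>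

locale K3t_free_domination =
  fixes V :: "'a set" and E :: "'a \<Rightarrow> 'a \<Rightarrow> bool" and t :: nat and Nb :: int and D :: "'a set"
  assumes graph: "simple_graph V E" and nonempty: "V \<noteq> {}"
    and K3t_free: "\<not> contains_K3t V E t"
    and dominating: "dominating_set V E D"
    and nabla_less: "nabla1B V E < real_of_int Nb"
begin

definition D1 :: "'a set" where
  "D1 = {v \<in> V. \<forall>A. A \<subseteq> V - {v} \<and> nbhd V E v \<subseteq> cnbhd_set V E A \<longrightarrow> int (card A) > 2 * Nb - 1}"

definition R1 :: "'a set" where "R1 = V - cnbhd_set V E D1"

definition NR1 :: "'a \<Rightarrow> 'a set" where "NR1 v = nbhd V E v \<inter> R1"

definition B :: "'a \<Rightarrow> 'a set" where
  "B v = {z \<in> V - {v}. int (card (NR1 v \<inter> NR1 z)) \<ge> (2 * Nb - 1) * int t + 1}"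

definition W :: "'a set" where "W = {v \<in> V. B v \<noteq> {}}"

definition D2 :: "'a set" where "D2 = (\<Union>v\<in>W. insert v (B v))"

definition k :: nat where "k = nat (2 * Nb - 1)"

lemma finite_V: "finite V"
  using graph unfolding simple_graph_def by blast

lemma D_subset: "D \<subseteq> V"
  using dominating unfolding dominating_set_def by blast

lemma Nb_pos: "1 \<le> Nb"
  using nabla_less nabla1B_nonneg[OF finite_V nonempty, of E] by linarith

lemma int_k: "int k = 2 * Nb - 1"
  using Nb_pos unfolding k_def by simp

lemma D1_iff:
  "v \<in> D1 \<longleftrightarrow>
     v \<in> V \<and> (\<forall>A. A \<subseteq> V - {v} \<longrightarrow> nbhd V E v \<subseteq> cnbhd_set V E A \<longrightarrow> k < card A)"
  unfolding D1_def int_k[symmetric] of_nat_less_iff by blast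

lemma B_iff: "z \<in> B v \<longleftrightarrow> z \<in> V \<and> z \<noteq> v \<and> k * t + 1 \<le> card (NR1 v \<inter> NR1 z)"
proof -
  have "(2 * Nb - 1) * int t + 1 = int (k * t + 1)" using int_k by simp
  then have "(2 * Nb - 1) * int t + 1 \<le> int c \<longleftrightarrow> k * t + 1 \<le> c" for c
    by (simp only: of_nat_le_iff)
  then show ?thesis unfolding B_def by blast
qed

lemma common_nbhd_of_B:
  assumes "z \<in> B v"
  shows "NR1 v \<inter> NR1 z \<subseteq> nbhd V E v \<inter> nbhd V E z" "NR1 v \<inter> NR1 z \<noteq> {}"
  using assms unfolding B_iff NR1_def by auto

lemma B_sym: "z \<in> B v \<Longrightarrow> v \<in> B z"
proof -
  assume "z \<in> B v"
  then obtain c where "c \<in> nbhd V E v" using common_nbhd_of_B by blast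
  then have "v \<in> V" unfolding nbhd_def using simple_graph_in_V[OF graph] by blast
  then show "v \<in> B z" using \<open>z \<in> B v\<close> unfolding B_iff by (auto simp: Int_commute)
qed

lemma not_in_D1_if_B:
  assumes "z \<in> B v"
  shows "v \<notin> D1"
proof
  assume "v \<in> D1"
  obtain c where "c \<in> NR1 v" using common_nbhd_of_B(2)[OF assms] by blast
  then have "c \<in> R1" "c \<in> cnbhd V E v" unfolding NR1_def cnbhd_def by auto
  moreover have "c \<in> cnbhd_set V E D1"
    using \<open>v \<in> D1\<close> \<open>c \<in> cnbhd V E v\<close> unfolding cnbhd_set_def by blast
  ultimately show False unfolding R1_def by blast
qed

lemma card_cover_gt_if_B:
  assumes "z \<in> B v" "A \<subseteq> V" "v \<notin> A" "z \<notin> A" "nbhd V E v \<subseteq> cnbhd_set V E A"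
  shows "k < card A"
proof (rule ccontr)
  assume "\<not> k < card A"
  have "finite A" using assms(2) finite_V finite_subset by blast
  have "v \<noteq> z" "k * t + 1 \<le> card (NR1 v \<inter> NR1 z)" using assms(1) unfolding B_iff by auto
  have "NR1 v \<inter> NR1 z \<subseteq> cnbhd_set V E A" using assms(5) unfolding NR1_def by blast
  moreover have "card A \<le> k" using \<open>\<not> k < card A\<close> by simp
  ultimately have "contains_K3t V E t"
    by (intro contains_K3t_if_common_nbhd_covered[OF graph \<open>v \<noteq> z\<close> common_nbhd_of_B(1)[OF assms(1)]
      \<open>k * t + 1 \<le> card (NR1 v \<inter> NR1 z)\<close> \<open>finite A\<close> assms(2) _ assms(3,4)])
  with K3t_free show False ..
qed

lemma card_B_le: "card (B v) \<le> k"
proof (cases "B v = {}")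
  case False
  then obtain z where "z \<in> B v" by blast
  then have "v \<notin> D1" "v \<in> V"
    using not_in_D1_if_B B_sym[of z v] unfolding B_iff by auto
  then obtain A where A: "A \<subseteq> V" "v \<notin> A" "nbhd V E v \<subseteq> cnbhd_set V E A" "card A \<le> k"
    unfolding D1_iff by (auto simp: not_less)
  have "B v \<subseteq> A"
  proof
    fix u assume "u \<in> B v"
    show "u \<in> A"
    proof (rule ccontr)
      assume "u \<notin> A"
      have "k < card A" using card_cover_gt_if_B[OF \<open>u \<in> B v\<close> A(1,2) \<open>u \<notin> A\<close> A(3)] .
      then show False using A(4) by simp
    qed
  qed
  moreover have "finite A" using A(1) finite_V finite_subset by blast
  ultimately show ?thesis using card_mono A(4) by (meson le_trans)
qed simp

lemma card_D_pos: "0 < card D"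
proof -
  have "D \<noteq> {}"
    using dominating nonempty unfolding dominating_set_def cnbhd_set_def by auto
  then show ?thesis using D_subset finite_V finite_subset by (simp add: card_gt_0_iff) blast
qed

lemma D1_D2_subset: "D1 \<union> D2 \<subseteq> V"
  unfolding D1_def D2_def W_def B_def by blast

definition expensive :: "'a set" where
  "expensive = {v \<in> (D1 \<union> D2) - D. v \<in> D1 \<or> (\<exists>z\<in>B v. z \<notin> D)}"

lemma card_cover_expensive:
  assumes "v \<in> expensive" "A \<subseteq> D" "nbhd V E v \<subseteq> cnbhd_set V E A"
  shows "2 * Nb \<le> int (card A)"
proof -
  have "v \<in> V" "v \<notin> D" using assms(1) D1_D2_subset unfolding expensive_def by auto
  have "A \<subseteq> V" "v \<notin> A" using assms(2) D_subset \<open>v \<notin> D\<close> by auto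
  have "k < card A"
  proof (cases "v \<in> D1")
    case True
    then show ?thesis using \<open>A \<subseteq> V\<close> \<open>v \<notin> A\<close> assms(3) unfolding D1_iff by blast
  next
    case False
    then obtain z where "z \<in> B v" "z \<notin> A" using assms(1,2) unfolding expensive_def by blast
    then show ?thesis using card_cover_gt_if_B \<open>A \<subseteq> V\<close> \<open>v \<notin> A\<close> assms(3) by blast
  qed
  then show ?thesis using int_k by linarith
qed

lemma D1_D2_minus_D_subset: "(D1 \<union> D2) - D \<subseteq> expensive \<union> (\<Union>z\<in>(D1 \<union> D2) \<inter> D. B z)"
proof
  fix v assume v: "v \<in> (D1 \<union> D2) - D"
  show "v \<in> expensive \<union> (\<Union>z\<in>(D1 \<union> D2) \<inter> D. B z)"
  proof (cases "v \<in> expensive")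
    case False
    then have "v \<in> D2" and partners_in_D: "B v \<subseteq> D"
      using v unfolding expensive_def by blast+
    then obtain w where "w \<in> W" "v = w \<or> v \<in> B w" unfolding D2_def by blast
    then have "B v \<noteq> {}" using B_sym[of v w] unfolding W_def by blast
    then obtain z where "z \<in> B v" by blast
    have "v \<in> B z" using B_sym[OF \<open>z \<in> B v\<close>] .
    have "z \<in> D" using partners_in_D \<open>z \<in> B v\<close> by blast
    have "z \<in> V" using \<open>z \<in> B v\<close> unfolding B_iff by blast
    then have "z \<in> W" using \<open>v \<in> B z\<close> unfolding W_def by blast
    then have "z \<in> D2" unfolding D2_def by blast
    then show ?thesis using \<open>v \<in> B z\<close> \<open>z \<in> D\<close> by blast
  qed simp
qed

lemma card_expensive_less: "real (card expensive) < hall_ratio V E * real (card D)"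
proof -
  have "expensive \<subseteq> V" using D1_D2_subset unfolding expensive_def by blast
  have "card I \<le> card D - 1" if "I \<subseteq> expensive" "independent V E I" for I
  proof (cases "I = {}")
    case False
    have "I \<subseteq> V - D"
      using \<open>I \<subseteq> expensive\<close> \<open>expensive \<subseteq> V\<close> unfolding expensive_def by blast
    moreover have "\<forall>x\<in>I. \<forall>y\<in>I. \<not> E x y"
      using \<open>independent V E I\<close> unfolding independent_def by blast
    ultimately have "card I < card D"
      using card_independent_less_card_dominating[OF graph dominating _ False _ _ nabla_less]
        card_cover_expensive \<open>I \<subseteq> expensive\<close> by blast
    then show ?thesis by simp
  qed simp
  then have "real (card expensive) \<le> hall_ratio V E * real (card D - 1)"
    by (rule card_le_hall_ratio_mult[OF graph nonempty \<open>expensive \<subseteq> V\<close>])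
  also have "\<dots> < hall_ratio V E * real (card D)"
    using hall_ratio_ge_1[OF graph nonempty] card_D_pos by (simp add: of_nat_diff)
  finally show ?thesis .
qed

theorem card_D1_D2_less:
  "real (card (D1 \<union> D2))
     < hall_ratio V E * real (card D) + 2 * real_of_int Nb * real (card ((D1 \<union> D2) \<inter> D))"
proof -
  have "finite (D1 \<union> D2)" using D1_D2_subset finite_V finite_subset by blast
  moreover have "finite expensive"
    using calculation unfolding expensive_def by (rule rev_finite_subset) blast
  moreover have "finite (B z)" for z
    using finite_V unfolding B_def by (rule rev_finite_subset) blast
  ultimately have "card (D1 \<union> D2) \<le> card expensive + (k + 1) * card ((D1 \<union> D2) \<inter> D)"
    by (rule card_le_charging[OF _ _ _ D1_D2_minus_D_subset card_B_le])
  then have "real (card (D1 \<union> D2))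
      \<le> real (card expensive) + real (k + 1) * real (card ((D1 \<union> D2) \<inter> D))"
    by (simp only: of_nat_add[symmetric] of_nat_mult[symmetric] of_nat_le_iff)
  moreover have "real (k + 1) = 2 * real_of_int Nb"
  proof -
    have "real (k + 1) = real_of_int (int k + 1)" by simp
    then show ?thesis using int_k by simp
  qed
  ultimately show ?thesis using card_expensive_less by simp
qed

end

theorem lemma34:
  fixes V :: "'a set" and E :: "'a \<Rightarrow> 'a \<Rightarrow> bool" and t :: nat
    and D :: "'a set" and \<gamma> :: nat and Nb :: int and \<eta> :: real
    and D1 R1 D2 W :: "'a set" and NR1 B :: "'a \<Rightarrow> 'a set"
  assumes G: "simple_graph V E" and nonempty: "V \<noteq> {}"
    and t3: "t \<ge> 3"
    and noK: "\<not> contains_K3t V E t"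
    and Dmin: "min_dominating_set V E D" and gamma: "\<gamma> = card D"
    and nabla: "real_of_int Nb > nabla1B V E"
    and D1_def: "D1 = {v \<in> V. \<forall>A. A \<subseteq> V - {v} \<and> nbhd V E v \<subseteq> cnbhd_set V E A
                         \<longrightarrow> int (card A) > 2 * Nb - 1}"
    and R1_def: "R1 = V - cnbhd_set V E D1"
    and NR1_def: "\<And>v. NR1 v = nbhd V E v \<inter> R1"
    and B_def: "\<And>v. B v = {z \<in> V - {v}.
                   int (card (NR1 v \<inter> NR1 z)) \<ge> (2 * Nb - 1) * int t + 1}"
    and W_def: "W = {v \<in> V. B v \<noteq> {}}"
    and D2_def: "D2 = (\<Union>v\<in>W. insert v (B v))"
    and eta: "0 \<le> \<eta>" "\<eta> \<le> 1"
    and eta_eq: "real (card ((D1 \<union> D2) \<inter> D)) = \<eta> * real \<gamma>"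
  shows "real (card (D1 \<union> D2)) < hall_ratio V E * real \<gamma> + 2 * real_of_int Nb * \<eta> * real \<gamma>"
proof -
  interpret dom: K3t_free_domination V E t Nb D
    using G nonempty noK Dmin nabla unfolding min_dominating_set_def
    by unfold_locales blast+
  have "D1 = dom.D1" unfolding D1_def dom.D1_def ..
  moreover have "NR1 = dom.NR1"
    using \<open>D1 = dom.D1\<close> by (intro ext) (simp add: NR1_def dom.NR1_def R1_def dom.R1_def)
  then have "B = dom.B" unfolding dom.B_def by (intro ext) (simp add: B_def)
  then have "D2 = dom.D2" unfolding D2_def W_def dom.D2_def dom.W_def by blast
  ultimately show ?thesis
    using dom.card_D1_D2_less eta_eq gamma by (simp add: mult.assoc)
qed

end
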